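(* Two directed graphs $G_1,G_2$ on $[n]$ without self-loops are distribution equivalent, i.e. $\mathcal{P}(G_1)=\mathcal{P}(G_2)$, if and only if there exists a permutation matrix $P\in\{0,1\}^{n\times n}$ such that $I+B_{G_2}=P(I+B_{G_1})$.
   Context: For a directed graph $G$ on $[n]$ without self-loops, $B_G\in\{0,1\}^{n\times n}$ is its adjacency matrix with $[B_G]_{ij}=1$ iff there is an edge $j\to i$. A linear structural causal model consistent with $G$ is $\mathbf{x}=W\mathbf{x}+\mathbf{e}$ with $W\in\mathbb{R}^{n\times n}$ such that $\{(i,j):W_{ij}\neq0\}=\{(i,j):[B_G]_{ij}=1\}$ and $I-W$ invertible, and noise $\mathbf{e}$ with jointly independent components, at most one of which is Gaussian. $\mathcal{P}(G)$ is the set of all distributions of $\mathbf{x}=(I-W)^{-1}\mathbf{e}$ over all such $W$ and noise distributions. *)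

theory Defs
  imports "HOL-Probability.Probability"
begin

text \<open>A directed graph on the finite vertex type 'n is an edge set E; (j,i) \<in> E means j \<rightarrow> i.\<close>

definition no_self_loops :: "('n \<times> 'n) set \<Rightarrow> bool" where
  "no_self_loops E \<longleftrightarrow> (\<forall>i. (i, i) \<notin> E)"

definition adj_matrix :: "('n::finite \<times> 'n) set \<Rightarrow> real^'n^'n" where
  "adj_matrix E = (\<chi> i j. if (j, i) \<in> E then 1 else 0)"

definition permutation_matrix :: "real^'n^'n::finite \<Rightarrow> bool" where
  "permutation_matrix P \<longleftrightarrow>
     (\<forall>i j. P $ i $ j = 0 \<or> P $ i $ j = 1) \<and>
     (\<forall>i. \<exists>!j. P $ i $ j = 1) \<and>
     (\<forall>j. \<exists>!i. P $ i $ j = 1)"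

definition is_gaussian :: "real measure \<Rightarrow> bool" where
  "is_gaussian M \<longleftrightarrow> (\<exists>m \<sigma>. \<sigma> > 0 \<and> M = density lborel (normal_density m \<sigma>))"

definition lsem_weights :: "('n::finite \<times> 'n) set \<Rightarrow> real^'n^'n \<Rightarrow> bool" where
  "lsem_weights E W \<longleftrightarrow>
     (\<forall>i j. W $ i $ j \<noteq> 0 \<longleftrightarrow> adj_matrix E $ i $ j = 1) \<and> invertible (mat 1 - W)"

text \<open>Admissible noise: jointly independent components (i.e. joint law is the product
  of the marginals \<mu> i), at most one of which is Gaussian.\<close>
definition lsem_noise :: "('n::finite \<Rightarrow> real measure) \<Rightarrow> bool" where
  "lsem_noise \<mu> \<longleftrightarrow>
     (\<forall>i. prob_space (\<mu> i) \<and> sets (\<mu> i) = sets borel) \<and>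
     card {i. is_gaussian (\<mu> i)} \<le> 1"

definition lsem_models :: "('n::finite \<times> 'n) set \<Rightarrow> (real^'n) measure set" where
  "lsem_models E =
     {distr (PiM UNIV \<mu>) borel (\<lambda>e. matrix_inv (mat 1 - W) *v vec_lambda e) | W \<mu>.
        lsem_weights E W \<and> lsem_noise \<mu>}"

end

theory Submission
  imports Defs
begin

text \<open>
  Since the model class admits any non-Gaussian noise, discrete noise can serve as a probe.

  If the rows of \<open>I + B\<^sub>2\<close> are those of \<open>I + B\<^sub>1\<close> permuted by \<open>\<sigma>\<close>, every model
  \<open>(W, e)\<close> of \<open>G\<^sub>1\<close> is also one of \<open>G\<^sub>2\<close>: put \<open>I - W' = D P (I - W)\<close>, where \<open>P\<close> permutes
  rows by \<open>\<sigma>\<close> and the diagonal \<open>D\<close> restores a unit diagonal, and permute and rescale the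
  noise accordingly; the number of Gaussian components does not change.

  Conversely, take admissible weights \<open>W\<^sub>1\<close> for \<open>G\<^sub>1\<close> with i.i.d. Bernoulli(1/2) noise. The
  law of \<open>x\<close> has its atoms exactly at the points \<open>t\<close> with \<open>(I - W\<^sub>1) t\<close> in the cube
  \<open>{0,1}\<^sup>n\<close>. If the same law arises from \<open>(W\<^sub>2, e)\<close> for \<open>G\<^sub>2\<close>, its atoms are also the points
  with \<open>(I - W\<^sub>2) t\<close> in the box \<open>S\<^sub>1 \<times> \<dots> \<times> S\<^sub>n\<close> of noise atoms, so
  \<open>A = (I - W\<^sub>2) (I - W\<^sub>1)\<^sup>-\<^sup>1\<close> maps the cube bijectively onto the box. Every \<open>S\<^sub>i\<close> contains \<open>0\<close>
  and a nonzero entry of row \<open>i\<close> of \<open>A\<close>, and \<open>\<Prod> |S\<^sub>i| = 2\<^sup>n\<close>, so \<open>S\<^sub>i = {0, a}\<close>; a second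
  nonzero entry \<open>b\<close> in that row would give \<open>b = a\<close> and \<open>2a \<in> S\<^sub>i\<close>, impossible. Hence \<open>A\<close> is a
  scaled permutation matrix, and the support pattern \<open>I + B\<^sub>2\<close> of \<open>I - W\<^sub>2 = A (I - W\<^sub>1)\<close> is the
  row-permuted support pattern \<open>I + B\<^sub>1\<close> of \<open>I - W\<^sub>1\<close>.
\<close>

lemma matrix_inv_right:
  fixes A :: "'a::semiring_1^'n^'m"
  assumes "invertible A"
  shows "A ** matrix_inv A = mat 1"
  using someI_ex[OF assms[unfolded invertible_def]] unfolding matrix_inv_def by blast

lemma matrix_inv_left:
  fixes A :: "'a::semiring_1^'n^'m"
  assumes "invertible A"
  shows "matrix_inv A ** A = mat 1"
  using someI_ex[OF assms[unfolded invertible_def]] unfolding matrix_inv_def by blast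

lemma invertible_matrix_inv:
  fixes A :: "'a::semiring_1^'n^'m"
  shows "invertible A \<Longrightarrow> invertible (matrix_inv A)"
  using matrix_inv_left matrix_inv_right unfolding invertible_def by blast

lemma matrix_inv_mult_vector_eq_iff:
  fixes A :: "'a::comm_semiring_1^'n^'m"
  assumes "invertible A"
  shows "matrix_inv A *v y = x \<longleftrightarrow> y = A *v x"
  by (metis assms matrix_inv_left matrix_inv_right matrix_vector_mul_assoc matrix_vector_mul_lid)

lemma invertible_row_nonzero:
  fixes A :: "'a::semiring_1^'n^'m"
  assumes "invertible A"
  shows "\<exists>j. A $ i $ j \<noteq> 0"
proof (rule ccontr)
  assume "\<nexists>j. A $ i $ j \<noteq> 0"
  then have "(A ** matrix_inv A) $ i $ i = 0" by (simp add: matrix_matrix_mult_def)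
  then show False by (simp add: matrix_inv_right[OF assms] mat_def)
qed

lemma invertible_column_nonzero:
  fixes A :: "'a::semiring_1^'n^'m"
  assumes "invertible A"
  shows "\<exists>i. A $ i $ j \<noteq> 0"
proof (rule ccontr)
  assume "\<nexists>i. A $ i $ j \<noteq> 0"
  then have "(matrix_inv A ** A) $ j $ j = 0" by (simp add: matrix_matrix_mult_def)
  then show False by (simp add: matrix_inv_left[OF assms] mat_def)
qed

lemma matrix_vector_mult_axis_component:
  fixes A :: "'a::semiring_1^'n^'m"
  shows "(A *v axis j 1) $ i = A $ i $ j"
  by (simp add: matrix_vector_mult_def axis_def if_distrib[of "\<lambda>a. _ * a"] sum.delta' cong: if_cong)

lemma image_vimage_invertible_matrix_vector_mult:
  fixes A :: "'a::field^'n^'n"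
  assumes "invertible A"
  shows "(*v) A ` ((*v) A -` T) = T"
proof -
  have "surj ((*v) A)"
    using assms matrix_inv_right matrix_right_invertible_surjective by blast
  then show ?thesis by simp
qed

lemma vimage_matrix_mult_matrix_inv:
  fixes M N :: "'a::field^'n^'n"
  assumes inv: "invertible M" and preimages: "(*v) M -` X = (*v) N -` Y"
  shows "(*v) (N ** matrix_inv M) -` Y = X"
proof -
  have "(N ** matrix_inv M) *v u \<in> Y \<longleftrightarrow> M *v (matrix_inv M *v u) \<in> X" for u
  proof -
    have "(N ** matrix_inv M) *v u \<in> Y \<longleftrightarrow> matrix_inv M *v u \<in> (*v) N -` Y"
      by (simp add: matrix_vector_mul_assoc)
    also have "\<dots> \<longleftrightarrow> M *v (matrix_inv M *v u) \<in> X"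
      unfolding preimages[symmetric] by simp
    finally show ?thesis .
  qed
  then show ?thesis by (simp add: set_eq_iff matrix_vector_mul_assoc matrix_inv_right[OF inv])
qed

lemma invertible_mat1_minus_small:
  fixes W :: "real^'n::finite^'n"
  assumes small: "\<And>i j. \<bar>W $ i $ j\<bar> \<le> c" and contraction: "real CARD('n) * c < 1"
  shows "invertible (mat 1 - W)"
proof -
  have "x = 0" if "(mat 1 - W) *v x = 0" for x :: "real^'n"
  proof -
    have fixpoint: "x = W *v x" using that by (simp add: matrix_vector_mult_diff_rdistrib)
    define m where "m = Max (range (\<lambda>i. \<bar>x $ i\<bar>))"
    have le_m: "\<bar>x $ i\<bar> \<le> m" for i unfolding m_def by (rule Max_ge) auto
    have "m \<in> range (\<lambda>i. \<bar>x $ i\<bar>)" unfolding m_def by (rule Max_in) auto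
    then obtain i0 where i0: "m = \<bar>x $ i0\<bar>" by blast
    have "m = \<bar>\<Sum>j\<in>UNIV. W $ i0 $ j * x $ j\<bar>"
      using i0 arg_cong[OF fixpoint, of "\<lambda>v. v $ i0"] by (simp add: matrix_vector_mult_def)
    also have "\<dots> \<le> (\<Sum>j\<in>UNIV. \<bar>W $ i0 $ j * x $ j\<bar>)" by (rule sum_abs)
    also have "\<dots> \<le> (\<Sum>j\<in>(UNIV::'n set). c * m)"
      by (intro sum_mono)
        (auto simp: abs_mult intro!: mult_mono small le_m order_trans[OF abs_ge_zero small])
    also have "\<dots> = real CARD('n) * c * m" by simp
    finally have "(1 - real CARD('n) * c) * m \<le> 0" by (simp add: algebra_simps)
    then have "m \<le> 0" using contraction by (simp add: mult_le_0_iff)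
    then show "x = 0" using le_m by (simp add: vec_eq_iff) (meson abs_le_zero_iff order_trans)
  qed
  then show ?thesis
    using matrix_left_invertible_ker invertible_left_inverse by blast
qed

section \<open>Monomial and permutation matrices\<close>

definition monomial_matrix :: "('m \<Rightarrow> 'n) \<Rightarrow> ('m \<Rightarrow> 'a::zero) \<Rightarrow> 'a^'n^'m" where
  "monomial_matrix \<sigma> c = (\<chi> i j. if j = \<sigma> i then c i else 0)"

lemma monomial_matrix_mult:
  fixes X :: "'a::semiring_1^'k^'n"
  shows "(monomial_matrix \<sigma> c ** X) $ i $ k = c i * X $ \<sigma> i $ k"
  by (simp add: monomial_matrix_def matrix_matrix_mult_def if_distrib[of "\<lambda>a. a * _"] sum.delta'
      cong: if_cong)

lemma monomial_matrix_mult_vector: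
  fixes v :: "'a::semiring_1^'n"
  shows "(monomial_matrix \<sigma> c *v v) $ i = c i * v $ \<sigma> i"
  by (simp add: monomial_matrix_def matrix_vector_mult_def if_distrib[of "\<lambda>a. a * _"] sum.delta'
      cong: if_cong)

lemma monomial_matrix_inv_mult:
  fixes X :: "'a::semiring_1^'k^'n"
  assumes "surj \<sigma>"
  shows "monomial_matrix (inv \<sigma>) (\<lambda>_. 1) ** (monomial_matrix \<sigma> (\<lambda>_. 1) ** X) = X"
  by (simp add: vec_eq_iff monomial_matrix_mult surj_f_inv_f[OF assms])

lemma invertible_monomial_matrix:
  fixes \<sigma> :: "'n::finite \<Rightarrow> 'n" and c :: "'n \<Rightarrow> 'a::field"
  assumes "bij \<sigma>" and "\<And>i. c i \<noteq> 0"
  shows "invertible (monomial_matrix \<sigma> c)"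
proof -
  have "monomial_matrix \<sigma> c ** monomial_matrix (inv \<sigma>) (\<lambda>j. inverse (c (inv \<sigma> j))) = mat 1"
    using assms by (simp add: vec_eq_iff monomial_matrix_mult mat_def)
      (simp add: monomial_matrix_def inv_f_f[OF bij_is_inj[OF assms(1)]])
  then show ?thesis using invertible_right_inverse by blast
qed

lemma permutation_matrix_iff_monomial:
  fixes P :: "real^'n::finite^'n"
  shows "permutation_matrix P \<longleftrightarrow> (\<exists>\<sigma>. bij \<sigma> \<and> P = monomial_matrix \<sigma> (\<lambda>_. 1))"
proof
  assume P: "permutation_matrix P"
  define \<sigma> where "\<sigma> i = (THE j. P $ i $ j = 1)" for i
  have zero_one: "P $ i $ j = 0 \<or> P $ i $ j = 1" and row: "\<exists>!j. P $ i $ j = 1"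
    and column: "\<exists>!i. P $ i $ j = 1" for i j
    using P unfolding permutation_matrix_def by blast+
  have \<sigma>_one: "P $ i $ \<sigma> i = 1" for i unfolding \<sigma>_def by (rule theI'[OF row])
  have one: "P $ i $ j = 1 \<longleftrightarrow> j = \<sigma> i" for i j
  proof
    show "P $ i $ j = 1 \<Longrightarrow> j = \<sigma> i"
      unfolding \<sigma>_def by (rule the1_equality[OF row, symmetric])
  qed (use \<sigma>_one in simp)
  have "P $ i $ j = (if j = \<sigma> i then 1 else 0)" for i j
    using zero_one[of i j] one[of i j] by auto
  then have "P = monomial_matrix \<sigma> (\<lambda>_. 1)" by (simp add: vec_eq_iff monomial_matrix_def)
  moreover have "bij \<sigma>"
  proof -
    have "inj \<sigma>"
    proof (rule injI)
      fix a b assume "\<sigma> a = \<sigma> b"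
      then show "a = b"
        using \<sigma>_one[of a] \<sigma>_one[of b] the1_equality[OF column[of "\<sigma> a"]] by metis
    qed
    then show ?thesis unfolding bij_def using finite_UNIV_inj_surj[OF finite] by blast
  qed
  ultimately show "\<exists>\<sigma>. bij \<sigma> \<and> P = monomial_matrix \<sigma> (\<lambda>_. 1)" by blast
next
  assume "\<exists>\<sigma>. bij \<sigma> \<and> P = monomial_matrix \<sigma> (\<lambda>_. 1)"
  then obtain \<sigma> where "bij \<sigma>" and P: "P = monomial_matrix \<sigma> (\<lambda>_. 1)" by blast
  have "P $ i $ j = 1 \<longleftrightarrow> \<sigma> i = j" and "P $ i $ j = 0 \<or> P $ i $ j = 1" for i j
    by (auto simp: P monomial_matrix_def)
  moreover have "\<forall>j. \<exists>!i. \<sigma> i = j" using \<open>bij \<sigma>\<close> unfolding bij_iff by blast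
  ultimately show "permutation_matrix P"
    unfolding permutation_matrix_def by simp
qed

lemma invertible_single_entry_rows_imp_monomial:
  fixes A :: "'a::field^'n::finite^'n"
  assumes inv: "invertible A" and single: "\<And>i j k. A $ i $ j \<noteq> 0 \<Longrightarrow> A $ i $ k \<noteq> 0 \<Longrightarrow> j = k"
  shows "\<exists>\<sigma> c. bij \<sigma> \<and> (\<forall>i. c i \<noteq> 0) \<and> A = monomial_matrix \<sigma> c"
proof -
  define \<sigma> where "\<sigma> i = (SOME j. A $ i $ j \<noteq> 0)" for i
  have \<sigma>: "A $ i $ \<sigma> i \<noteq> 0" for i
    unfolding \<sigma>_def using invertible_row_nonzero[OF inv] by (rule someI_ex)
  have "\<exists>i. j = \<sigma> i" for j
  proof -
    obtain i where "A $ i $ j \<noteq> 0" using invertible_column_nonzero[OF inv] by blast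
    then show ?thesis using single[OF _ \<sigma>] by blast
  qed
  then have "surj \<sigma>" unfolding surj_def by blast
  then have "bij \<sigma>" using finite_UNIV_surj_inj[OF finite] by (simp add: bij_def)
  have "A $ i $ j = 0" if "j \<noteq> \<sigma> i" for i j
    using single[OF _ \<sigma>[of i], of j] that by blast
  then have "A = monomial_matrix \<sigma> (\<lambda>i. A $ i $ \<sigma> i)" by (simp add: vec_eq_iff monomial_matrix_def)
  then show ?thesis
    using \<open>bij \<sigma>\<close> \<sigma> by (intro exI[of _ \<sigma>] exI[of _ "\<lambda>i. A $ i $ \<sigma> i"]) blast
qed

definition support_matrix :: "'a::{zero,one}^'n^'m \<Rightarrow> 'a^'n^'m" where
  "support_matrix X = (\<chi> i j. if X $ i $ j = 0 then 0 else 1)"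

lemma support_matrix_monomial_mult:
  fixes X :: "'a::{semiring_1,semiring_no_zero_divisors}^'k^'n::finite"
  assumes "\<And>i. c i \<noteq> 0"
  shows "support_matrix (monomial_matrix \<sigma> c ** X) = monomial_matrix \<sigma> (\<lambda>_. 1) ** support_matrix X"
  using assms by (simp add: vec_eq_iff support_matrix_def monomial_matrix_mult)

section \<open>Invertible matrices mapping the cube onto a box\<close>

definition vec_box :: "('n \<Rightarrow> 'a set) \<Rightarrow> ('a^'n) set" where
  "vec_box S = {x. \<forall>i. x $ i \<in> S i}"

lemma vec_box_eq_image_PiE: "vec_box S = vec_lambda ` PiE UNIV S"
proof -
  have "x \<in> vec_lambda ` PiE UNIV S" if "x \<in> vec_box S" for x
    using that by (intro image_eqI[of x _ "vec_nth x"]) (auto simp: vec_box_def PiE_UNIV_domain)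
  then show ?thesis by (auto simp: vec_box_def PiE_UNIV_domain)
qed

lemma card_vec_box: "card (vec_box S :: ('a^'n::finite) set) = (\<Prod>i\<in>UNIV. card (S i))"
  unfolding vec_box_eq_image_PiE
  by (subst card_image) (auto simp: card_PiE inj_on_def vec_lambda_inject)

lemma finite_vec_box: "(\<And>i. finite (S i)) \<Longrightarrow> finite (vec_box S :: ('a^'n::finite) set)"
  unfolding vec_box_eq_image_PiE by (intro finite_imageI finite_PiE) auto

lemma prod_eq_power_card_imp_eq:
  fixes f :: "'a \<Rightarrow> 'b::linordered_semidom"
  assumes "finite I" and ge: "\<And>i. i \<in> I \<Longrightarrow> b \<le> f i" and "b > 0"
    and product: "prod f I = b ^ card I" and "i \<in> I"
  shows "f i = b"
proof (rule ccontr)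
  assume "f i \<noteq> b"
  with ge \<open>i \<in> I\<close> have "b < f i" by (simp add: order_less_le)
  moreover have "(\<Prod>_\<in>I - {i}. b) \<le> prod f (I - {i})"
    using ge \<open>b > 0\<close> by (intro prod_mono) auto
  moreover have "0 < (\<Prod>_\<in>I - {i}. b)" using \<open>b > 0\<close> by simp
  ultimately have "b * (\<Prod>_\<in>I - {i}. b) < f i * prod f (I - {i})"
    using \<open>b > 0\<close> by (intro mult_less_le_imp_less) auto
  then have "(\<Prod>_\<in>I. b) < prod f I"
    by (simp only: prod.remove[OF assms(1,5)])
  then show False using product by simp
qed

lemma preimage_box_eq_cube_components:
  fixes A :: "'a::field^'n::finite^'n"
  assumes inv: "invertible A" and box: "(*v) A -` vec_box S = vec_box (\<lambda>_. {0, 1})"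
  shows "S l = (\<lambda>u. (A *v u) $ l) ` vec_box (\<lambda>_. {0, 1})"
proof
  have image: "(*v) A ` vec_box (\<lambda>_. {0, 1}) = vec_box S"
    using image_vimage_invertible_matrix_vector_mult[OF inv, of "vec_box S"] by (simp only: box)
  then show "(\<lambda>u. (A *v u) $ l) ` vec_box (\<lambda>_. {0, 1}) \<subseteq> S l"
    unfolding vec_box_def by blast
  have "(0::'a^'n) \<in> (*v) A -` vec_box S" unfolding box by (simp add: vec_box_def)
  then have zero: "0 \<in> S k" for k by (simp add: vec_box_def)
  show "S l \<subseteq> (\<lambda>u. (A *v u) $ l) ` vec_box (\<lambda>_. {0, 1})"
  proof
    fix c assume "c \<in> S l"
    then have "(\<chi> k. if k = l then c else 0) \<in> vec_box S" using zero by (simp add: vec_box_def)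
    then obtain u where "u \<in> vec_box (\<lambda>_. {0, 1})" and "(\<chi> k. if k = l then c else 0) = A *v u"
      unfolding image[symmetric] by blast
    then show "c \<in> (\<lambda>u. (A *v u) $ l) ` vec_box (\<lambda>_. {0, 1})"
      by (intro image_eqI[of _ _ u]) (auto simp: vec_eq_iff dest: spec[of _ l])
  qed
qed

lemma preimage_box_eq_cube_card:
  fixes A :: "'a::field^'n::finite^'n"
  assumes inv: "invertible A" and box: "(*v) A -` vec_box S = vec_box (\<lambda>_. {0, 1})"
  shows "card (S l) = 2"
proof -
  let ?C = "vec_box (\<lambda>_::'n. {0, 1::'a})"
  have S_image: "S k = (\<lambda>u. (A *v u) $ k) ` ?C" for k
    by (rule preimage_box_eq_cube_components[OF assms])
  have "card (vec_box S) = card ((*v) A ` ?C)"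
    using image_vimage_invertible_matrix_vector_mult[OF inv, of "vec_box S"] by (simp only: box)
  also have "\<dots> = card ?C"
    using inj_matrix_vector_mult[OF inv] by (simp add: card_image inj_on_subset)
  finally have product: "(\<Prod>k\<in>UNIV. card (S k)) = 2 ^ card (UNIV :: 'n set)"
    by (simp add: card_vec_box numeral_2_eq_2)
  have "2 \<le> card (S k)" for k
  proof -
    obtain j where j: "A $ k $ j \<noteq> 0" using invertible_row_nonzero[OF inv] by blast
    have row_value: "(A *v u) $ k \<in> S k" if "u \<in> ?C" for u
      using S_image[of k] that by blast
    have "0 \<in> S k" using row_value[of 0] by (simp add: vec_box_def)
    moreover have "(A *v axis j 1) $ k \<in> S k" by (rule row_value) (simp add: vec_box_def axis_def)
    ultimately have "{0, A $ k $ j} \<subseteq> S k" by (simp add: matrix_vector_mult_axis_component)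
    moreover have "finite (S k)" unfolding S_image by (intro finite_imageI finite_vec_box) auto
    ultimately have "card {0, A $ k $ j} \<le> card (S k)" by (intro card_mono)
    with j show ?thesis by simp
  qed
  then show ?thesis
    using prod_eq_power_card_imp_eq[where I=UNIV and f="\<lambda>k. card (S k)" and b=2 and i=l] product by simp
qed

text \<open>Characteristic \<open>0\<close> is needed: over \<open>GF(2)\<close> the shear \<open>[[1,1],[0,1]]\<close> maps the cube
  onto itself.\<close>

lemma preimage_box_eq_cube_single_entry_rows:
  fixes A :: "'a::field_char_0^'n::finite^'n"
  assumes inv: "invertible A" and box: "(*v) A -` vec_box S = vec_box (\<lambda>_. {0, 1})"
    and j: "A $ i $ j \<noteq> 0" and k: "A $ i $ k \<noteq> 0"
  shows "j = k"
proof (rule ccontr)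
  assume "j \<noteq> k"
  have row_value: "(A *v u) $ i \<in> S i" if "u \<in> vec_box (\<lambda>_. {0, 1})" for u
    using preimage_box_eq_cube_components[OF inv box, of i] that by blast
  have "(A *v axis j 1) $ i \<in> S i" "(A *v axis k 1) $ i \<in> S i"
    "(A *v (axis j 1 + axis k 1)) $ i \<in> S i"
    using \<open>j \<noteq> k\<close> by (auto intro!: row_value simp: vec_box_def axis_def)
  moreover have "0 \<in> S i" using row_value[of 0] by (simp add: vec_box_def)
  ultimately have in_S: "0 \<in> S i" "A $ i $ j \<in> S i" "A $ i $ k \<in> S i" "A $ i $ j + A $ i $ k \<in> S i"
    by (simp_all add: matrix_vector_right_distrib matrix_vector_mult_axis_component)
  have "card (S i) = 2" by (rule preimage_box_eq_cube_card[OF inv box])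
  then have S_i: "S i = {0, A $ i $ j}"
    using in_S j by (intro card_subset_eq[symmetric] card_ge_0_finite) auto
  then have "A $ i $ k = A $ i $ j" using in_S(3) k by simp
  then have "A $ i $ j + A $ i $ j \<in> {0, A $ i $ j}" using in_S(4) S_i by simp
  then show False using j by auto
qed

section \<open>Atoms, Gaussians and product measures\<close>

definition atoms :: "'a measure \<Rightarrow> 'a set" where
  "atoms M = {x. emeasure M {x} \<noteq> 0}"

definition bernoulli01 :: "real measure" where
  "bernoulli01 = distr (measure_pmf (bernoulli_pmf (1/2))) borel of_bool"

lemma prob_space_bernoulli01: "prob_space bernoulli01"
  unfolding bernoulli01_def by (rule prob_space.prob_space_distr) (auto intro: prob_space_measure_pmf)

lemma sets_bernoulli01: "sets bernoulli01 = sets borel"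
  by (simp add: bernoulli01_def)

lemma atoms_bernoulli01: "atoms bernoulli01 = {0, 1}"
proof -
  have "emeasure bernoulli01 {x} = emeasure (measure_pmf (bernoulli_pmf (1/2))) (of_bool -` {x})" for x
    unfolding bernoulli01_def by (subst emeasure_distr) auto
  moreover have "of_bool -` {x} = (if x = 1 then {True} else if x = 0 then {False} else {})" for x :: real
    by auto
  ultimately show ?thesis by (auto simp: atoms_def emeasure_pmf_single)
qed

lemma atoms_gaussian:
  assumes "is_gaussian \<nu>"
  shows "atoms \<nu> = {}"
proof -
  obtain m \<sigma> where \<nu>: "\<nu> = density lborel (normal_density m \<sigma>)"
    using assms unfolding is_gaussian_def by blast
  have "emeasure \<nu> {x} = (\<integral>\<^sup>+ y. ennreal (normal_density m \<sigma> y) * indicator {x} y \<partial>lborel)" for x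
    unfolding \<nu> by (subst emeasure_density) auto
  also have "\<dots> x = 0" for x by (rule nn_integral_null_set) (auto simp: null_sets_def)
  finally show ?thesis by (simp add: atoms_def)
qed

lemma bernoulli01_not_gaussian: "\<not> is_gaussian bernoulli01"
  using atoms_gaussian atoms_bernoulli01 by blast

lemma is_gaussian_distr_mult:
  assumes "is_gaussian \<nu>" and "c \<noteq> 0"
  shows "is_gaussian (distr \<nu> borel (\<lambda>x. c * x))"
proof -
  obtain m \<sigma> where \<sigma>: "\<sigma> > 0" and \<nu>: "\<nu> = density lborel (normal_density m \<sigma>)"
    using assms(1) unfolding is_gaussian_def by blast
  have "prob_space \<nu>" unfolding \<nu> using \<sigma> by (rule prob_space_normal_density)
  moreover have "distributed \<nu> lborel (\<lambda>x. x) (normal_density m \<sigma>)"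
    unfolding distributed_def \<nu> by (auto simp: distr_id2 measurable_ident_sets)
  ultimately have "distributed \<nu> lborel (\<lambda>x. 0 + c * x) (normal_density (0 + c * m) (\<bar>c\<bar> * \<sigma>))"
    by (rule prob_space.normal_density_affine[OF _ _ \<sigma> assms(2)])
  then have "distr \<nu> borel (\<lambda>x. c * x) = density lborel (normal_density (c * m) (\<bar>c\<bar> * \<sigma>))"
    unfolding distributed_def by (simp add: distr_cong[OF refl sets_lborel])
  then show ?thesis
    unfolding is_gaussian_def using \<sigma> assms(2) by (intro exI[of _ "c * m"] exI[of _ "\<bar>c\<bar> * \<sigma>"]) simp
qed

lemma is_gaussian_distr_divideD:
  assumes "sets \<nu> = sets borel" and "d \<noteq> 0" and "is_gaussian (distr \<nu> borel (\<lambda>x. x / d))"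
  shows "is_gaussian \<nu>"
proof -
  have "distr (distr \<nu> borel (\<lambda>x. x / d)) borel (\<lambda>x. d * x) = distr \<nu> borel ((\<lambda>x. d * x) \<circ> (\<lambda>x. x / d))"
    by (rule distr_distr) (simp_all add: measurable_cong_sets[OF assms(1) refl])
  also have "\<dots> = \<nu>" using assms(1,2) by (simp add: o_def distr_id2)
  finally show ?thesis using is_gaussian_distr_mult[OF assms(3,2)] by simp
qed

lemma measurable_PiM_reindex_componentwise:
  fixes M :: "'i::finite \<Rightarrow> 'a measure"
  assumes "\<And>i. f i \<in> measurable (M (\<sigma> i)) (N i)"
  shows "(\<lambda>\<omega> i. f i (\<omega> (\<sigma> i))) \<in> measurable (PiM UNIV M) (PiM UNIV N)"
proof (rule measurable_PiM_single')
  show "(\<lambda>\<omega>. f i (\<omega> (\<sigma> i))) \<in> measurable (PiM UNIV M) (N i)" for i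
    using measurable_compose[OF measurable_component_singleton[of "\<sigma> i" UNIV M, OF UNIV_I] assms] .
  show "(\<lambda>\<omega> i. f i (\<omega> (\<sigma> i))) \<in> space (PiM UNIV M) \<rightarrow> (\<Pi>\<^sub>E i\<in>UNIV. space (N i))"
    by (auto simp: space_PiM PiE_iff measurable_space[OF assms])
qed

lemma distr_PiM_componentwise:
  fixes M :: "'i::finite \<Rightarrow> 'a measure"
  assumes M: "\<And>i. prob_space (M i)" and f: "\<And>i. f i \<in> measurable (M i) (N i)"
  shows "distr (PiM UNIV M) (PiM UNIV N) (\<lambda>\<omega> i. f i (\<omega> i)) = PiM UNIV (\<lambda>i. distr (M i) (N i) (f i))"
proof -
  interpret M: product_prob_space M by (rule product_prob_spaceI) (rule M)
  interpret D: product_prob_space "\<lambda>i. distr (M i) (N i) (f i)"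
    by (rule product_prob_spaceI) (rule prob_space.prob_space_distr[OF M f])
  have meas: "(\<lambda>\<omega> i. f i (\<omega> i)) \<in> measurable (PiM UNIV M) (PiM UNIV N)"
    using measurable_PiM_reindex_componentwise[where \<sigma>="\<lambda>i. i", OF f] .
  show ?thesis
  proof (rule D.PiM_eqI)
    show "sets (distr (PiM UNIV M) (PiM UNIV N) (\<lambda>\<omega> i. f i (\<omega> i)))
      = sets (PiM UNIV (\<lambda>i. distr (M i) (N i) (f i)))"
      by (auto intro!: sets_PiM_cong)
  next
    fix A assume A: "\<And>i. i \<in> UNIV \<Longrightarrow> A i \<in> sets (distr (M i) (N i) (f i))"
    have "emeasure (distr (PiM UNIV M) (PiM UNIV N) (\<lambda>\<omega> i. f i (\<omega> i))) (PiE UNIV A)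
        = emeasure (PiM UNIV M) ((\<lambda>\<omega> i. f i (\<omega> i)) -` PiE UNIV A \<inter> space (PiM UNIV M))"
      using A by (intro emeasure_distr[OF meas] sets_PiM_I_finite) auto
    also have "(\<lambda>\<omega> i. f i (\<omega> i)) -` PiE UNIV A \<inter> space (PiM UNIV M)
        = PiE UNIV (\<lambda>i. f i -` A i \<inter> space (M i))"
      by (auto simp: space_PiM PiE_iff)
    also have "emeasure (PiM UNIV M) \<dots> = (\<Prod>i\<in>UNIV. emeasure (M i) (f i -` A i \<inter> space (M i)))"
      using A by (intro M.emeasure_PiM) (auto intro: measurable_sets[OF f])
    also have "\<dots> = (\<Prod>i\<in>UNIV. emeasure (distr (M i) (N i) (f i)) (A i))"
      using A by (intro prod.cong emeasure_distr[symmetric] f) auto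
    finally show "emeasure (distr (PiM UNIV M) (PiM UNIV N) (\<lambda>\<omega> i. f i (\<omega> i))) (PiE UNIV A)
        = (\<Prod>i\<in>UNIV. emeasure (distr (M i) (N i) (f i)) (A i))" .
  qed simp
qed

lemma distr_PiM_reindex_componentwise:
  fixes M :: "'i::finite \<Rightarrow> 'a measure" and \<sigma> :: "'j::finite \<Rightarrow> 'i"
  assumes "inj \<sigma>" and M: "\<And>i. prob_space (M i)" and f: "\<And>i. f i \<in> measurable (M (\<sigma> i)) (N i)"
  shows "distr (PiM UNIV M) (PiM UNIV N) (\<lambda>\<omega> i. f i (\<omega> (\<sigma> i)))
    = PiM UNIV (\<lambda>i. distr (M (\<sigma> i)) (N i) (f i))"
proof -
  have reindex: "distr (PiM UNIV M) (PiM UNIV (\<lambda>i. M (\<sigma> i))) (\<lambda>\<omega> i. \<omega> (\<sigma> i)) = PiM UNIV (\<lambda>i. M (\<sigma> i))"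
    using distr_PiM_reindex[of UNIV M \<sigma> UNIV] assms(1) M by (simp add: restrict_UNIV)
  have "distr (PiM UNIV M) (PiM UNIV N) (\<lambda>\<omega> i. f i (\<omega> (\<sigma> i)))
      = distr (distr (PiM UNIV M) (PiM UNIV (\<lambda>i. M (\<sigma> i))) (\<lambda>\<omega> i. \<omega> (\<sigma> i))) (PiM UNIV N)
          (\<lambda>\<omega> i. f i (\<omega> i))"
    by (subst distr_distr)
      (auto simp: o_def
        intro: measurable_PiM_reindex_componentwise[where \<sigma>="\<lambda>i. i" and M="\<lambda>i. M (\<sigma> i)", OF f]
          measurable_PiM_reindex_componentwise[where f="\<lambda>_ x. x"])
  also have "\<dots> = PiM UNIV (\<lambda>i. distr (M (\<sigma> i)) (N i) (f i))"
    unfolding reindex by (rule distr_PiM_componentwise) (use M f in auto)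
  finally show ?thesis .
qed

lemma measurable_vec_lambda_PiM:
  fixes M :: "'n::finite \<Rightarrow> real measure"
  assumes "\<And>i. sets (M i) = sets borel"
  shows "(\<lambda>e. vec_lambda e :: real^'n) \<in> borel_measurable (PiM UNIV M)"
proof (subst borel_measurable_euclidean_space, intro ballI)
  fix b :: "real^'n" assume "b \<in> Basis"
  then obtain i where b: "b = axis i 1" by (auto simp: Basis_vec_def)
  have "(\<lambda>e. e i) \<in> borel_measurable (PiM UNIV M)"
    using measurable_component_singleton[of i UNIV M] by (simp add: measurable_cong_sets[OF refl assms])
  then show "(\<lambda>e. vec_lambda e \<bullet> b) \<in> borel_measurable (PiM UNIV M)"
    by (simp add: b cart_eq_inner_axis[symmetric])
qed

lemma measurable_matrix_vector_mult_vec_lambda: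
  fixes A :: "real^'n::finite^'m::finite"
  assumes "\<And>i. sets (M i) = sets borel"
  shows "(\<lambda>e. A *v vec_lambda e) \<in> borel_measurable (PiM UNIV M)"
  using measurable_vec_lambda_PiM[OF assms]
  by (rule measurable_compose)
    (intro borel_measurable_continuous_onI linear_continuous_on matrix_vector_mul_bounded_linear)

section \<open>Linear structural equation models\<close>

definition lsem_law :: "real^'n::finite^'n \<Rightarrow> ('n \<Rightarrow> real measure) \<Rightarrow> (real^'n) measure" where
  "lsem_law W \<mu> = distr (PiM UNIV \<mu>) borel (\<lambda>e. matrix_inv (mat 1 - W) *v vec_lambda e)"

lemma mem_lsem_models_iff:
  "m \<in> lsem_models E \<longleftrightarrow> (\<exists>W \<mu>. lsem_weights E W \<and> lsem_noise \<mu> \<and> m = lsem_law W \<mu>)"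
  unfolding lsem_models_def lsem_law_def by blast

lemma lsem_noiseD:
  assumes "lsem_noise \<mu>"
  shows "prob_space (\<mu> i)" and "sets (\<mu> i) = sets borel" and "space (\<mu> i) = UNIV"
  using assms sets_eq_imp_space_eq[of "\<mu> i" borel] unfolding lsem_noise_def by auto

lemma emeasure_lsem_law_singleton:
  assumes inv: "invertible (mat 1 - W)" and noise: "lsem_noise \<mu>"
  shows "emeasure (lsem_law W \<mu>) {x} = (\<Prod>i\<in>UNIV. emeasure (\<mu> i) {((mat 1 - W) *v x) $ i})"
proof -
  interpret product_prob_space \<mu> by (rule product_prob_spaceI) (rule lsem_noiseD(1)[OF noise])
  have "matrix_inv (mat 1 - W) *v vec_lambda e = x \<longleftrightarrow> (\<forall>i. e i = ((mat 1 - W) *v x) $ i)" for e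
    unfolding matrix_inv_mult_vector_eq_iff[OF inv] by (simp add: vec_eq_iff)
  then have "(\<lambda>e. matrix_inv (mat 1 - W) *v vec_lambda e) -` {x} \<inter> space (PiM UNIV \<mu>)
      = PiE UNIV (\<lambda>i. {((mat 1 - W) *v x) $ i})"
    by (auto simp: space_PiM lsem_noiseD(3)[OF noise] PiE_UNIV_domain)
  then show ?thesis
    unfolding lsem_law_def
    by (subst emeasure_distr)
      (auto simp: lsem_noiseD(2)[OF noise] intro!: measurable_matrix_vector_mult_vec_lambda emeasure_PiM)
qed

lemma atoms_lsem_law:
  assumes "invertible (mat 1 - W)" and "lsem_noise \<mu>"
  shows "atoms (lsem_law W \<mu>) = (*v) (mat 1 - W) -` vec_box (\<lambda>i. atoms (\<mu> i))"
  using emeasure_lsem_law_singleton[OF assms] by (auto simp: atoms_def vec_box_def prod_zero_iff)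

lemma lsem_noise_reindex_scale:
  assumes noise: "lsem_noise \<mu>" and "bij \<sigma>" and d: "\<And>i. d i \<noteq> 0"
  shows "lsem_noise (\<lambda>i. distr (\<mu> (\<sigma> i)) borel (\<lambda>x. x / d i))"
proof -
  have "{i. is_gaussian (distr (\<mu> (\<sigma> i)) borel (\<lambda>x. x / d i))} \<subseteq> \<sigma> -` {j. is_gaussian (\<mu> j)}"
    using is_gaussian_distr_divideD[OF lsem_noiseD(2)[OF noise] d] by blast
  then have "card {i. is_gaussian (distr (\<mu> (\<sigma> i)) borel (\<lambda>x. x / d i))} \<le> card (\<sigma> -` {j. is_gaussian (\<mu> j)})"
    by (intro card_mono) simp_all
  also have "\<dots> = card {j. is_gaussian (\<mu> j)}"
    using \<open>bij \<sigma>\<close> by (intro card_vimage_inj) (auto simp: bij_def)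
  also have "\<dots> \<le> 1" using noise by (simp add: lsem_noise_def)
  finally show ?thesis
    using noise unfolding lsem_noise_def
    by (auto intro!: prob_space.prob_space_distr simp: measurable_cong_sets[OF lsem_noiseD(2)[OF noise] refl])
qed

lemma lsem_law_reindex_scale:
  assumes noise: "lsem_noise \<mu>" and "bij \<sigma>" and d: "\<And>i. d i \<noteq> 0" and inv: "invertible (mat 1 - W)"
  shows "lsem_law (mat 1 - monomial_matrix \<sigma> (\<lambda>i. 1 / d i) ** (mat 1 - W))
      (\<lambda>i. distr (\<mu> (\<sigma> i)) borel (\<lambda>x. x / d i)) = lsem_law W \<mu>"
proof -
  let ?D = "monomial_matrix \<sigma> (\<lambda>i. 1 / d i)"
  let ?h = "\<lambda>e i. e (\<sigma> i) / d i"
  have inv': "invertible (?D ** (mat 1 - W))"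
    using \<open>bij \<sigma>\<close> d by (intro invertible_mult invertible_monomial_matrix inv) simp_all
  have scale: "(\<lambda>x. x / d i) \<in> measurable (\<mu> j) borel" for i j
    by (simp add: measurable_cong_sets[OF lsem_noiseD(2)[OF noise] refl])
  have PiM: "distr (PiM UNIV \<mu>) (PiM UNIV (\<lambda>_. borel)) ?h = PiM UNIV (\<lambda>i. distr (\<mu> (\<sigma> i)) borel (\<lambda>x. x / d i))"
    using \<open>bij \<sigma>\<close> by (intro distr_PiM_reindex_componentwise lsem_noiseD(1)[OF noise] scale) (simp add: bij_is_inj)
  have point: "matrix_inv (?D ** (mat 1 - W)) *v vec_lambda (?h e) = matrix_inv (mat 1 - W) *v vec_lambda e" for e
  proof -
    have "vec_lambda (?h e) = ?D *v vec_lambda e" by (simp add: vec_eq_iff monomial_matrix_mult_vector)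
    also have "\<dots> = ?D *v ((mat 1 - W) *v (matrix_inv (mat 1 - W) *v vec_lambda e))"
      by (simp add: matrix_vector_mul_assoc matrix_inv_right[OF inv])
    also have "\<dots> = (?D ** (mat 1 - W)) *v (matrix_inv (mat 1 - W) *v vec_lambda e)"
      by (rule matrix_vector_mul_assoc)
    finally show ?thesis by (simp add: matrix_inv_mult_vector_eq_iff[OF inv'])
  qed
  have "lsem_law (mat 1 - ?D ** (mat 1 - W)) (\<lambda>i. distr (\<mu> (\<sigma> i)) borel (\<lambda>x. x / d i))
      = distr (distr (PiM UNIV \<mu>) (PiM UNIV (\<lambda>_. borel)) ?h) borel
          (\<lambda>e. matrix_inv (?D ** (mat 1 - W)) *v vec_lambda e)"
    by (simp add: lsem_law_def PiM)
  also have "\<dots> = distr (PiM UNIV \<mu>) borel (\<lambda>e. matrix_inv (?D ** (mat 1 - W)) *v vec_lambda (?h e))"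
    by (subst distr_distr)
      (auto simp: o_def intro!: measurable_matrix_vector_mult_vec_lambda
        measurable_PiM_reindex_componentwise[where N="\<lambda>_. borel"] scale)
  also have "\<dots> = lsem_law W \<mu>" by (simp add: lsem_law_def point)
  finally show ?thesis .
qed

lemma lsem_weights_iff_support:
  assumes "no_self_loops E"
  shows "lsem_weights E W \<longleftrightarrow>
    support_matrix (mat 1 - W) = mat 1 + adj_matrix E \<and> (\<forall>i. W $ i $ i = 0) \<and> invertible (mat 1 - W)"
proof -
  have loop_free: "(i, i) \<notin> E" for i using assms by (simp add: no_self_loops_def)
  have "(\<forall>i k. W $ i $ k \<noteq> 0 \<longleftrightarrow> adj_matrix E $ i $ k = 1) \<longleftrightarrow>
      support_matrix (mat 1 - W) = mat 1 + adj_matrix E \<and> (\<forall>i. W $ i $ i = 0)"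
    using loop_free
    by (auto simp: vec_eq_iff support_matrix_def adj_matrix_def mat_def split: if_splits)
  then show ?thesis by (auto simp: lsem_weights_def)
qed

lemma lsem_weights_exist:
  fixes E :: "('n::finite \<times> 'n) set"
  shows "\<exists>W. lsem_weights E W"
proof -
  define c :: real where "c = 1 / (2 * real CARD('n))"
  define W where "W = c *\<^sub>R adj_matrix E"
  have nonempty: "0 < CARD('n)" by (simp add: card_gt_0_iff)
  then have "c > 0" by (simp add: c_def)
  then have "\<forall>i j. W $ i $ j \<noteq> 0 \<longleftrightarrow> adj_matrix E $ i $ j = 1"
    by (simp add: W_def adj_matrix_def)
  moreover have "invertible (mat 1 - W)"
  proof (rule invertible_mat1_minus_small)
    show "\<bar>W $ i $ j\<bar> \<le> c" for i j using \<open>c > 0\<close> by (simp add: W_def adj_matrix_def)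
    show "real CARD('n) * c < 1" using nonempty by (simp add: c_def)
  qed
  ultimately show ?thesis unfolding lsem_weights_def by blast
qed

lemma lsem_models_subset_imp_monomial:
  fixes G1 G2 :: "('n::finite \<times> 'n) set"
  assumes "lsem_models G1 \<subseteq> lsem_models G2"
  obtains W1 W2 \<sigma> c where "lsem_weights G1 W1" and "lsem_weights G2 W2" and "bij \<sigma>"
    and "\<And>i. c i \<noteq> 0" and "mat 1 - W2 = monomial_matrix \<sigma> c ** (mat 1 - W1)"
proof -
  obtain W1 where W1: "lsem_weights G1 W1" using lsem_weights_exist by blast
  have inv1: "invertible (mat 1 - W1)" using W1 by (simp add: lsem_weights_def)
  have noise1: "lsem_noise (\<lambda>_::'n. bernoulli01)"
    using prob_space_bernoulli01 sets_bernoulli01 bernoulli01_not_gaussian by (simp add: lsem_noise_def)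
  have "lsem_law W1 (\<lambda>_. bernoulli01) \<in> lsem_models G1"
    unfolding mem_lsem_models_iff using W1 noise1 by (intro exI[of _ W1] exI[of _ "\<lambda>_. bernoulli01"]) simp
  with assms have "lsem_law W1 (\<lambda>_. bernoulli01) \<in> lsem_models G2" by (rule subsetD)
  then obtain W2 \<mu> where W2: "lsem_weights G2 W2" and noise2: "lsem_noise \<mu>"
    and law: "lsem_law W1 (\<lambda>_. bernoulli01) = lsem_law W2 \<mu>"
    unfolding mem_lsem_models_iff by blast
  have inv2: "invertible (mat 1 - W2)" using W2 by (simp add: lsem_weights_def)
  define A where "A = (mat 1 - W2) ** matrix_inv (mat 1 - W1)"
  have invA: "invertible A" unfolding A_def by (intro invertible_mult invertible_matrix_inv inv1 inv2)
  have "(*v) (mat 1 - W1) -` vec_box (\<lambda>_. {0, 1}) = atoms (lsem_law W1 (\<lambda>_. bernoulli01))"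
    by (simp add: atoms_lsem_law[OF inv1 noise1] atoms_bernoulli01)
  also have "\<dots> = (*v) (mat 1 - W2) -` vec_box (\<lambda>i. atoms (\<mu> i))"
    unfolding law by (rule atoms_lsem_law[OF inv2 noise2])
  finally have box: "(*v) A -` vec_box (\<lambda>i. atoms (\<mu> i)) = vec_box (\<lambda>_. {0, 1})"
    unfolding A_def by (rule vimage_matrix_mult_matrix_inv[OF inv1])
  have "\<exists>\<sigma> c. bij \<sigma> \<and> (\<forall>i. c i \<noteq> 0) \<and> A = monomial_matrix \<sigma> c"
  proof (rule invertible_single_entry_rows_imp_monomial[OF invA])
    show "j = k" if "A $ i $ j \<noteq> 0" and "A $ i $ k \<noteq> 0" for i j k
      using preimage_box_eq_cube_single_entry_rows[OF invA box that] .
  qed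
  then obtain \<sigma> c where \<sigma>: "bij \<sigma>" and c: "\<And>i. c i \<noteq> 0" and A: "A = monomial_matrix \<sigma> c"
    by blast
  have "mat 1 - W2 = monomial_matrix \<sigma> c ** (mat 1 - W1)"
    unfolding A[symmetric] A_def by (simp add: matrix_mul_assoc[symmetric] matrix_inv_left[OF inv1])
  then show thesis by (rule that[OF W1 W2 \<sigma> c])
qed

lemma lsem_models_subset_imp_row_permutation:
  fixes G1 G2 :: "('n::finite \<times> 'n) set"
  assumes "no_self_loops G1" and "no_self_loops G2" and "lsem_models G1 \<subseteq> lsem_models G2"
  obtains \<sigma> where "bij \<sigma>"
    and "mat 1 + adj_matrix G2 = monomial_matrix \<sigma> (\<lambda>_. 1) ** (mat 1 + adj_matrix G1)"
proof -
  obtain W1 W2 \<sigma> c where W1: "lsem_weights G1 W1" and W2: "lsem_weights G2 W2" and "bij \<sigma>"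
    and c: "\<And>i. c i \<noteq> 0" and rows: "mat 1 - W2 = monomial_matrix \<sigma> c ** (mat 1 - W1)"
    using lsem_models_subset_imp_monomial[OF assms(3)] by blast
  have "mat 1 + adj_matrix G2 = support_matrix (mat 1 - W2)"
    using W2 lsem_weights_iff_support[OF assms(2)] by simp
  also have "\<dots> = monomial_matrix \<sigma> (\<lambda>_. 1) ** support_matrix (mat 1 - W1)"
    unfolding rows by (rule support_matrix_monomial_mult[OF c])
  also have "support_matrix (mat 1 - W1) = mat 1 + adj_matrix G1"
    using W1 lsem_weights_iff_support[OF assms(1)] by simp
  finally show thesis using that \<open>bij \<sigma>\<close> by blast
qed

lemma row_permutation_imp_lsem_models_subset:
  fixes G1 G2 :: "('n::finite \<times> 'n) set"
  assumes loops1: "no_self_loops G1" and loops2: "no_self_loops G2" and "bij \<sigma>"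
    and rows: "mat 1 + adj_matrix G2 = monomial_matrix \<sigma> (\<lambda>_. 1) ** (mat 1 + adj_matrix G1)"
  shows "lsem_models G1 \<subseteq> lsem_models G2"
proof
  fix m assume "m \<in> lsem_models G1"
  then obtain W \<mu> where W: "lsem_weights G1 W" and noise: "lsem_noise \<mu>" and m: "m = lsem_law W \<mu>"
    unfolding mem_lsem_models_iff by blast
  have support: "support_matrix (mat 1 - W) = mat 1 + adj_matrix G1" and inv: "invertible (mat 1 - W)"
    using W lsem_weights_iff_support[OF loops1] by simp_all
  define d where "d i = (mat 1 - W) $ \<sigma> i $ i" for i
  have diagonal: "support_matrix (mat 1 - W) $ \<sigma> i $ i = 1" for i
    unfolding support using arg_cong[OF rows, of "\<lambda>X. X $ i $ i"] loops2
    by (simp add: monomial_matrix_mult mat_def adj_matrix_def no_self_loops_def)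
  have d: "d i \<noteq> 0" for i
    using diagonal[of i] by (auto simp: d_def support_matrix_def split: if_splits)
  define W' where "W' = mat 1 - monomial_matrix \<sigma> (\<lambda>i. 1 / d i) ** (mat 1 - W)"
  have I_W': "mat 1 - W' = monomial_matrix \<sigma> (\<lambda>i. 1 / d i) ** (mat 1 - W)"
    by (simp add: W'_def)
  have "lsem_weights G2 W'"
    unfolding lsem_weights_iff_support[OF loops2]
  proof (intro conjI allI)
    show "support_matrix (mat 1 - W') = mat 1 + adj_matrix G2"
      using d by (simp add: I_W' support_matrix_monomial_mult support rows)
    have "(mat 1 - W') $ i $ i = 1" for i
      using d[of i] by (simp add: I_W' monomial_matrix_mult d_def)
    then show "W' $ i $ i = 0" for i by (simp add: mat_def)
    show "invertible (mat 1 - W')"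
      unfolding I_W' using \<open>bij \<sigma>\<close> d by (intro invertible_mult invertible_monomial_matrix inv) simp_all
  qed
  moreover have "lsem_noise (\<lambda>i. distr (\<mu> (\<sigma> i)) borel (\<lambda>x. x / d i))"
    by (rule lsem_noise_reindex_scale[OF noise \<open>bij \<sigma>\<close> d])
  moreover have "lsem_law W' (\<lambda>i. distr (\<mu> (\<sigma> i)) borel (\<lambda>x. x / d i)) = m"
    unfolding m W'_def by (rule lsem_law_reindex_scale[OF noise \<open>bij \<sigma>\<close> d inv])
  ultimately show "m \<in> lsem_models G2" unfolding mem_lsem_models_iff by blast
qed

theorem proposition2:
  fixes G1 G2 :: "('n::finite \<times> 'n) set"
  assumes "no_self_loops G1" and "no_self_loops G2"
  shows "lsem_models G1 = lsem_models G2 \<longleftrightarrow>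
         (\<exists>P. permutation_matrix P \<and> mat 1 + adj_matrix G2 = P ** (mat 1 + adj_matrix G1))"
proof
  assume "lsem_models G1 = lsem_models G2"
  then have "lsem_models G1 \<subseteq> lsem_models G2" by simp
  then obtain \<sigma> where "bij \<sigma>"
    and "mat 1 + adj_matrix G2 = monomial_matrix \<sigma> (\<lambda>_. 1) ** (mat 1 + adj_matrix G1)"
    by (rule lsem_models_subset_imp_row_permutation[OF assms])
  moreover from \<open>bij \<sigma>\<close> have "permutation_matrix (monomial_matrix \<sigma> (\<lambda>_. 1) :: real^'n^'n)"
    unfolding permutation_matrix_iff_monomial by blast
  ultimately show "\<exists>P. permutation_matrix P \<and> mat 1 + adj_matrix G2 = P ** (mat 1 + adj_matrix G1)"
    by blast
next
  assume "\<exists>P. permutation_matrix P \<and> mat 1 + adj_matrix G2 = P ** (mat 1 + adj_matrix G1)"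
  then obtain P where P: "permutation_matrix P" and eq: "mat 1 + adj_matrix G2 = P ** (mat 1 + adj_matrix G1)"
    by blast
  obtain \<sigma> where \<sigma>: "bij \<sigma>" and "P = monomial_matrix \<sigma> (\<lambda>_. 1)"
    using P unfolding permutation_matrix_iff_monomial by blast
  with eq have rows: "mat 1 + adj_matrix G2 = monomial_matrix \<sigma> (\<lambda>_. 1) ** (mat 1 + adj_matrix G1)"
    by simp
  then have "mat 1 + adj_matrix G1 = monomial_matrix (inv \<sigma>) (\<lambda>_. 1) ** (mat 1 + adj_matrix G2)"
    by (simp add: monomial_matrix_inv_mult[OF bij_is_surj[OF \<sigma>]])
  then show "lsem_models G1 = lsem_models G2"
    using row_permutation_imp_lsem_models_subset[OF assms \<sigma> rows]
      row_permutation_imp_lsem_models_subset[OF assms(2,1) bij_imp_bij_inv[OF \<sigma>]] by blast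
qed

end
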